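(* Let $S$ be a subspace of $\mathcal{A}\otimes\mathcal{B}$ (finite-dimensional). If there is a PPT-definite operator $\sigma$ with $\operatorname{supp}(\sigma)\subseteq S$, then $S$ is strongly PPT-unextendible.
   Context: A bipartite positive semidefinite operator $E\in\mathcal{L}(\mathcal{A}\otimes\mathcal{B})$ is PPT if its partial transpose $E^{T_B}$ (defined by $(|i\rangle\langle k|\otimes|j\rangle\langle l|)^{T_B}=|i\rangle\langle k|\otimes|l\rangle\langle j|$) is positive semidefinite, and PPT-definite if $E\ge 0$ and $E^{T_B}$ is positive definite. A subspace $S\subseteq\mathcal{A}\otimes\mathcal{B}$ is PPT-extendible if there exists a nonzero PPT operator whose support is contained in the orthogonal complement $S^\perp$; $S$ is strongly PPT-unextendible if for every positive integer $k$, $S^{\otimes k}\subseteq\mathcal{A}^{\otimes k}\otimes\mathcal{B}^{\otimes k}$ is not PPT-extendible (with respect to the bipartition $\mathcal{A}^{\otimes k}:\mathcal{B}^{\otimes k}$). *)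

theory Defs
  imports Complex_Main
begin

text \<open>Finite-dimensional Hilbert spaces are modelled concretely: a space with
orthonormal basis indexed by a finite set I consists of the functions
v :: 'i \<Rightarrow> complex vanishing outside I; operators are matrices
E :: 'i \<Rightarrow> 'i \<Rightarrow> complex, of which only the block I \<times> I matters.
The bipartite space A \<otimes> B has basis index set X \<times> Y.\<close>

definition vecs :: "'i set \<Rightarrow> ('i \<Rightarrow> complex) set" where
  "vecs I = {v. \<forall>i. i \<notin> I \<longrightarrow> v i = 0}"

definition cinner :: "'i set \<Rightarrow> ('i \<Rightarrow> complex) \<Rightarrow> ('i \<Rightarrow> complex) \<Rightarrow> complex" where
  "cinner I u v = (\<Sum>i\<in>I. cnj (u i) * v i)"

definition opapply :: "'i set \<Rightarrow> ('i \<Rightarrow> 'i \<Rightarrow> complex) \<Rightarrow> ('i \<Rightarrow> complex) \<Rightarrow> ('i \<Rightarrow> complex)" where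
  "opapply I E v = (\<lambda>i. if i \<in> I then (\<Sum>j\<in>I. E i j * v j) else 0)"

definition op_nonzero :: "'i set \<Rightarrow> ('i \<Rightarrow> 'i \<Rightarrow> complex) \<Rightarrow> bool" where
  "op_nonzero I E \<longleftrightarrow> (\<exists>i\<in>I. \<exists>j\<in>I. E i j \<noteq> 0)"

definition psd :: "'i set \<Rightarrow> ('i \<Rightarrow> 'i \<Rightarrow> complex) \<Rightarrow> bool" where
  "psd I E \<longleftrightarrow> (\<forall>i\<in>I. \<forall>j\<in>I. E i j = cnj (E j i)) \<and>
     (\<forall>v \<in> vecs I. Im (cinner I v (opapply I E v)) = 0 \<and> Re (cinner I v (opapply I E v)) \<ge> 0)"

definition pos_def :: "'i set \<Rightarrow> ('i \<Rightarrow> 'i \<Rightarrow> complex) \<Rightarrow> bool" where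
  "pos_def I E \<longleftrightarrow> psd I E \<and>
     (\<forall>v \<in> vecs I. v \<noteq> (\<lambda>_. 0) \<longrightarrow> Re (cinner I v (opapply I E v)) > 0)"

text \<open>Partial transpose on the second factor:
 (|i><k| \<otimes> |j><l|)^{T_B} = |i><k| \<otimes> |l><j|.\<close>
definition partial_transpose ::
  "(('a \<times> 'b) \<Rightarrow> ('a \<times> 'b) \<Rightarrow> complex) \<Rightarrow> (('a \<times> 'b) \<Rightarrow> ('a \<times> 'b) \<Rightarrow> complex)" where
  "partial_transpose E = (\<lambda>(x, y) (x', y'). E (x, y') (x', y))"

definition ppt :: "('a \<times> 'b) set \<Rightarrow> (('a \<times> 'b) \<Rightarrow> ('a \<times> 'b) \<Rightarrow> complex) \<Rightarrow> bool" where
  "ppt I E \<longleftrightarrow> psd I E \<and> psd I (partial_transpose E)"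

definition ppt_definite :: "('a \<times> 'b) set \<Rightarrow> (('a \<times> 'b) \<Rightarrow> ('a \<times> 'b) \<Rightarrow> complex) \<Rightarrow> bool" where
  "ppt_definite I E \<longleftrightarrow> psd I E \<and> pos_def I (partial_transpose E)"

text \<open>Support of a (positive semidefinite) operator = its range.\<close>
definition support :: "'i set \<Rightarrow> ('i \<Rightarrow> 'i \<Rightarrow> complex) \<Rightarrow> ('i \<Rightarrow> complex) set" where
  "support I E = {opapply I E v | v. v \<in> vecs I}"

definition orth_compl :: "'i set \<Rightarrow> ('i \<Rightarrow> complex) set \<Rightarrow> ('i \<Rightarrow> complex) set" where
  "orth_compl I S = {v \<in> vecs I. \<forall>s\<in>S. cinner I s v = 0}"

definition is_subspace :: "'i set \<Rightarrow> ('i \<Rightarrow> complex) set \<Rightarrow> bool" where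
  "is_subspace I S \<longleftrightarrow> S \<subseteq> vecs I \<and> (\<lambda>_. 0) \<in> S \<and>
     (\<forall>u\<in>S. \<forall>v\<in>S. (\<lambda>i. u i + v i) \<in> S) \<and> (\<forall>c. \<forall>v\<in>S. (\<lambda>i. c * v i) \<in> S)"

definition ppt_extendible :: "('a \<times> 'b) set \<Rightarrow> (('a \<times> 'b) \<Rightarrow> complex) set \<Rightarrow> bool" where
  "ppt_extendible I S \<longleftrightarrow>
     (\<exists>E. op_nonzero I E \<and> ppt I E \<and> support I E \<subseteq> orth_compl I S)"

text \<open>Basis of the k-fold tensor power: lists of length k.\<close>
definition lists_k :: "nat \<Rightarrow> 'a set \<Rightarrow> 'a list set" where
  "lists_k k X = {xs. length xs = k \<and> set xs \<subseteq> X}"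

text \<open>Product vector s_0 \<otimes> ... \<otimes> s_{k-1} in (A\<otimes>B)^{\<otimes>k}, regrouped as a
vector of A^{\<otimes>k} \<otimes> B^{\<otimes>k}.\<close>
definition prod_vec :: "nat \<Rightarrow> (nat \<Rightarrow> ('a \<times> 'b \<Rightarrow> complex)) \<Rightarrow> ('a list \<times> 'b list \<Rightarrow> complex)" where
  "prod_vec k s = (\<lambda>(xs, ys). if length xs = k \<and> length ys = k
       then (\<Prod>l<k. s l (xs ! l, ys ! l)) else 0)"

definition tensor_power_space :: "nat \<Rightarrow> ('a \<times> 'b \<Rightarrow> complex) set \<Rightarrow> ('a list \<times> 'b list \<Rightarrow> complex) set" where
  "tensor_power_space k S = {v. \<exists>(m::nat) (c::nat \<Rightarrow> complex) s. (\<forall>j<m. \<forall>l<k. s j l \<in> S) \<and>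
       v = (\<lambda>i. \<Sum>j<m. c j * prod_vec k (s j) i)}"

definition strongly_ppt_unextendible :: "'a set \<Rightarrow> 'b set \<Rightarrow> ('a \<times> 'b \<Rightarrow> complex) set \<Rightarrow> bool" where
  "strongly_ppt_unextendible X Y S \<longleftrightarrow>
     (\<forall>k::nat. k > 0 \<longrightarrow> \<not> ppt_extendible (lists_k k X \<times> lists_k k Y) (tensor_power_space k S))"

end

theory Submission
  imports Defs
begin

text \<open>If E were a nonzero PPT operator orthogonal to S^{\<otimes>k}, then, since every column of
\<sigma>^{\<otimes>k} is a product of columns of \<sigma> and hence lies in S^{\<otimes>k}, we would get
Tr(\<sigma>^{\<otimes>k} E) = 0. The trace of a product is unchanged by partially transposing both factors, and
(\<sigma>^{\<otimes>k})^{T_B} = (\<sigma>^{T_B})^{\<otimes>k} is positive definite, so its trace against the nonzero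
positive semidefinite E^{T_B} is strictly positive.

Positive semidefinite operators are written as sums of rank-one terms v v^* by symmetric Gaussian
elimination; such an operator is positive definite iff the vectors v span the space, and this
property passes to tensor powers, which gives positive definiteness of (\<sigma>^{T_B})^{\<otimes>k}.\<close>

section \<open>Quadratic forms\<close>

definition hermitian :: "'i set \<Rightarrow> ('i \<Rightarrow> 'i \<Rightarrow> complex) \<Rightarrow> bool" where
  "hermitian I A \<longleftrightarrow> (\<forall>i\<in>I. \<forall>j\<in>I. A i j = cnj (A j i))"

definition quad_form :: "'i set \<Rightarrow> ('i \<Rightarrow> 'i \<Rightarrow> complex) \<Rightarrow> ('i \<Rightarrow> complex) \<Rightarrow> complex" where
  "quad_form I A x = (\<Sum>i\<in>I. \<Sum>j\<in>I. cnj (x i) * A i j * x j)"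

definition unit_vec :: "'i \<Rightarrow> 'i \<Rightarrow> complex" where
  "unit_vec a = (\<lambda>i. if i = a then 1 else 0)"

lemma cinner_opapply_eq_quad_form: "cinner I x (opapply I A x) = quad_form I A x"
  unfolding cinner_def opapply_def quad_form_def
  by (rule sum.cong) (auto simp: sum_distrib_left mult.assoc)

lemma psd_iff_quad_form:
  "psd I A \<longleftrightarrow> hermitian I A \<and>
     (\<forall>v \<in> vecs I. Im (quad_form I A v) = 0 \<and> Re (quad_form I A v) \<ge> 0)"
  unfolding psd_def hermitian_def cinner_opapply_eq_quad_form ..

lemma quad_form_restrict: "quad_form I A (\<lambda>i. if i \<in> I then x i else 0) = quad_form I A x"
  unfolding quad_form_def by (intro sum.cong refl) simp

lemma unit_vec_in_vecs: "a \<in> I \<Longrightarrow> unit_vec a \<in> vecs I"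
  by (auto simp: vecs_def unit_vec_def)

lemma cnj_unit_vec [simp]: "cnj (unit_vec a i) = unit_vec a i"
  by (simp add: unit_vec_def)

lemma sum_mult_unit_vec:
  "finite I \<Longrightarrow> a \<in> I \<Longrightarrow> (\<Sum>i\<in>I. f i * unit_vec a i) = f a"
  by (simp add: unit_vec_def if_distrib[where f="\<lambda>z. _ * z"] cong: if_cong)

lemma opapply_unit_vec:
  "finite I \<Longrightarrow> a \<in> I \<Longrightarrow> i \<in> I \<Longrightarrow> opapply I A (unit_vec a) i = A i a"
  by (simp add: opapply_def sum_mult_unit_vec)

lemma hermitian_diag_real: "hermitian I A \<Longrightarrow> a \<in> I \<Longrightarrow> A a a = of_real (Re (A a a))"
  unfolding hermitian_def by (metis Reals_cnj_iff complex_is_Real_iff of_real_Re)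

lemma hermitian_column_sum:
  assumes "hermitian I A" "a \<in> I"
  shows "(\<Sum>i\<in>I. cnj (x i) * A i a) = cnj (\<Sum>j\<in>I. A a j * x j)"
proof -
  have "cnj (x i) * A i a = cnj (A a i * x i)" if "i \<in> I" for i
    using assms that unfolding hermitian_def by (metis complex_cnj_mult mult.commute)
  then show ?thesis unfolding cnj_sum by (rule sum.cong[OF refl])
qed

lemma quad_form_add_unit_vec:
  assumes "finite I" "a \<in> I"
  shows "quad_form I A (\<lambda>i. x i + t * unit_vec a i) =
     quad_form I A x + t * (\<Sum>i\<in>I. cnj (x i) * A i a) + cnj t * (\<Sum>j\<in>I. A a j * x j)
       + cnj t * t * A a a"
proof -
  have "quad_form I A (\<lambda>i. x i + t * unit_vec a i) =
     quad_form I A x + (\<Sum>i\<in>I. cnj (x i) * (\<Sum>j\<in>I. A i j * unit_vec a j)) * t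
     + cnj t * (\<Sum>i\<in>I. (\<Sum>j\<in>I. A i j * x j) * unit_vec a i)
     + cnj t * (\<Sum>i\<in>I. (\<Sum>j\<in>I. A i j * unit_vec a j) * unit_vec a i) * t"
    unfolding quad_form_def
    by (simp add: algebra_simps sum.distrib sum_distrib_left sum_distrib_right)
  also have "\<dots> = quad_form I A x + (\<Sum>i\<in>I. cnj (x i) * A i a) * t
     + cnj t * (\<Sum>j\<in>I. A a j * x j) + cnj t * A a a * t"
    using assms by (simp add: sum_mult_unit_vec)
  finally show ?thesis by (simp add: ac_simps)
qed

lemma quad_form_unit_vec:
  assumes "finite I" "a \<in> I"
  shows "quad_form I A (unit_vec a) = A a a"
proof -
  have "quad_form I A (unit_vec a) = (\<Sum>i\<in>I. (\<Sum>j\<in>I. A i j * unit_vec a j) * unit_vec a i)"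
    unfolding quad_form_def sum_distrib_right by (simp add: ac_simps)
  then show ?thesis using assms by (simp add: sum_mult_unit_vec)
qed

lemma psd_diag_nonneg: "finite I \<Longrightarrow> a \<in> I \<Longrightarrow> psd I A \<Longrightarrow> Re (A a a) \<ge> 0"
  by (metis psd_iff_quad_form quad_form_unit_vec unit_vec_in_vecs)

lemma cnj_mult_self: "cnj z * z = of_real ((cmod z)\<^sup>2)"
  by (metis complex_norm_square mult.commute)

lemma psd_quad_form_shift:
  assumes "finite I" "a \<in> I" "psd I A" "x \<in> vecs I"
  shows "0 \<le> Re (quad_form I A x) + 2 * Re (cnj t * (\<Sum>j\<in>I. A a j * x j)) + (cmod t)\<^sup>2 * Re (A a a)"
proof -
  let ?b = "\<Sum>j\<in>I. A a j * x j"
  have herm: "hermitian I A" and nonneg: "\<forall>v\<in>vecs I. Re (quad_form I A v) \<ge> 0"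
    using assms(3) unfolding psd_iff_quad_form by blast+
  have "(\<lambda>i. x i + t * unit_vec a i) \<in> vecs I"
    using assms(2,4) unit_vec_in_vecs[OF assms(2)] by (simp add: vecs_def)
  then have "0 \<le> Re (quad_form I A (\<lambda>i. x i + t * unit_vec a i))" using nonneg by blast
  also have "\<dots> = Re (quad_form I A x + t * cnj ?b + cnj t * ?b + cnj t * t * A a a)"
    using quad_form_add_unit_vec[OF assms(1,2)] hermitian_column_sum[OF herm assms(2)] by simp
  also have "\<dots> = Re (quad_form I A x) + 2 * Re (cnj t * ?b) + (cmod t)\<^sup>2 * Re (A a a)"
  proof -
    have "Re (t * cnj ?b) = Re (cnj t * ?b)" by (metis cnj.sel(1) complex_cnj_cnj complex_cnj_mult)
    moreover have "cnj t * t * A a a = of_real ((cmod t)\<^sup>2 * Re (A a a))"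
      by (subst hermitian_diag_real[OF herm assms(2)], simp only: cnj_mult_self of_real_mult)
    ultimately show ?thesis by (simp only: plus_complex.sel Re_complex_of_real)
  qed
  finally show ?thesis .
qed

lemma psd_column_bound:
  assumes "finite I" "a \<in> I" "psd I A" "x \<in> vecs I"
  shows "(cmod (\<Sum>j\<in>I. A a j * x j))\<^sup>2 \<le> Re (quad_form I A x) * Re (A a a)"
proof -
  define b where "b = (\<Sum>j\<in>I. A a j * x j)"
  define q where "q = Re (quad_form I A x)"
  define r where "r = Re (A a a)"
  have shift: "0 \<le> q + 2 * Re (cnj t * b) + (cmod t)\<^sup>2 * r" for t
    using psd_quad_form_shift[OF assms] unfolding b_def q_def r_def .
  have "r \<ge> 0" using psd_diag_nonneg[OF assms(1-3)] unfolding r_def .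
  show ?thesis
  proof (cases "r = 0")
    case True
    have "b = 0"
    proof (rule ccontr)
      assume "b \<noteq> 0"
      then have c: "(cmod b)\<^sup>2 > 0" by simp
      define s where "s = (\<bar>q\<bar> + 1) / (2 * (cmod b)\<^sup>2)"
      have "cnj (- of_real s * b) * b = - (of_real s * (cnj b * b))" by simp
      also have "\<dots> = - of_real (s * (cmod b)\<^sup>2)" by (simp only: cnj_mult_self of_real_mult)
      finally have "Re (cnj (- of_real s * b) * b) = - s * (cmod b)\<^sup>2" by (simp only: uminus_complex.sel Re_complex_of_real mult_minus_left minus_divide_left)
      then have "0 \<le> q - 2 * s * (cmod b)\<^sup>2" using shift[of "- of_real s * b"] True by simp
      moreover have "2 * s * (cmod b)\<^sup>2 = \<bar>q\<bar> + 1" using c unfolding s_def by simp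
      ultimately show False by linarith
    qed
    then show ?thesis using True unfolding b_def q_def r_def by simp
  next
    case False
    then have "r > 0" using \<open>r \<ge> 0\<close> by simp
    \<comment> \<open>minimise over t along the direction of b\<close>
    define t where "t = - b / of_real r"
    have "cnj t * b = - (cnj b * b / of_real r)" unfolding t_def by simp
    also have "\<dots> = - of_real ((cmod b)\<^sup>2 / r)" by (simp only: cnj_mult_self of_real_divide)
    finally have "Re (cnj t * b) = - (cmod b)\<^sup>2 / r" by (simp only: uminus_complex.sel Re_complex_of_real mult_minus_left minus_divide_left)
    moreover have "(cmod t)\<^sup>2 * r = (cmod b)\<^sup>2 / r"
      unfolding t_def using \<open>r > 0\<close> by (simp add: norm_divide power2_eq_square)
    ultimately have "(cmod b)\<^sup>2 / r \<le> q" using shift[of t] by linarith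
    then show ?thesis using \<open>r > 0\<close> unfolding b_def q_def r_def by (simp add: divide_le_eq)
  qed
qed

lemma psd_diag_zero_row_zero:
  assumes "finite I" "a \<in> I" "j \<in> I" "psd I A" "Re (A a a) = 0"
  shows "A a j = 0"
  using psd_column_bound[OF assms(1,2,4) unit_vec_in_vecs[OF assms(3)]] assms
  by (simp add: sum_mult_unit_vec)

section \<open>Rank-one decompositions by symmetric elimination\<close>

definition rank_one_decomp :: "'i set \<Rightarrow> ('i \<Rightarrow> 'i \<Rightarrow> complex) \<Rightarrow> ('i \<Rightarrow> complex) list \<Rightarrow> bool" where
  "rank_one_decomp I M vs \<longleftrightarrow> (\<forall>i\<in>I. \<forall>j\<in>I. M i j = (\<Sum>v\<leftarrow>vs. v i * cnj (v j)))"

definition sym_eliminate :: "'i \<Rightarrow> ('i \<Rightarrow> 'i \<Rightarrow> complex) \<Rightarrow> ('i \<Rightarrow> 'i \<Rightarrow> complex)" where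
  "sym_eliminate a A = (\<lambda>i j. A i j - A i a * A a j / A a a)"

lemma sym_eliminate_pivot:
  assumes "A a a \<noteq> 0"
  shows "sym_eliminate a A a j = 0" "sym_eliminate a A i a = 0"
  using assms by (simp_all add: sym_eliminate_def)

lemma quad_form_sym_eliminate:
  assumes "hermitian I A" "a \<in> I"
  shows "quad_form I (sym_eliminate a A) x =
    quad_form I A x - cnj (\<Sum>j\<in>I. A a j * x j) * (\<Sum>j\<in>I. A a j * x j) / A a a"
proof -
  have "quad_form I (sym_eliminate a A) x =
      quad_form I A x - (\<Sum>i\<in>I. \<Sum>j\<in>I. (cnj (x i) * A i a) * (A a j * x j) / A a a)"
    unfolding quad_form_def sym_eliminate_def
    by (simp add: algebra_simps sum_subtractf)
  also have "\<dots> = quad_form I A x - (\<Sum>i\<in>I. cnj (x i) * A i a) * (\<Sum>j\<in>I. A a j * x j) / A a a"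
    by (simp add: sum_product sum_divide_distrib)
  finally show ?thesis unfolding hermitian_column_sum[OF assms] .
qed

lemma psd_sym_eliminate:
  assumes "finite I" "a \<in> I" "psd I A" "Re (A a a) > 0"
  shows "psd I (sym_eliminate a A)"
  unfolding psd_iff_quad_form
proof (intro conjI ballI)
  have herm: "hermitian I A" using assms(3) unfolding psd_iff_quad_form by blast
  define r where "r = Re (A a a)"
  have Aaa: "A a a = of_real r" using hermitian_diag_real[OF herm assms(2)] unfolding r_def .
  show "hermitian I (sym_eliminate a A)"
    unfolding hermitian_def
  proof (intro ballI)
    fix i j assume "i \<in> I" "j \<in> I"
    then have "A i j = cnj (A j i)" "A i a = cnj (A a i)" "A a j = cnj (A j a)"
      using herm assms(2) unfolding hermitian_def by blast+
    then show "sym_eliminate a A i j = cnj (sym_eliminate a A j i)"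
      unfolding sym_eliminate_def Aaa by (simp add: mult.commute)
  qed
  fix x assume x: "x \<in> vecs I"
  let ?b = "\<Sum>j\<in>I. A a j * x j"
  have "cnj ?b * ?b / A a a = of_real ((cmod ?b)\<^sup>2 / r)"
    unfolding Aaa by (simp only: cnj_mult_self of_real_divide)
  moreover have "(cmod ?b)\<^sup>2 / r \<le> Re (quad_form I A x)"
    using psd_column_bound[OF assms(1-3) x] assms(4) unfolding r_def by (simp add: divide_le_eq)
  moreover have "Im (quad_form I A x) = 0"
    using assms(3) x unfolding psd_iff_quad_form by blast
  ultimately show "Im (quad_form I (sym_eliminate a A) x) = 0"
    and "Re (quad_form I (sym_eliminate a A) x) \<ge> 0"
    unfolding quad_form_sym_eliminate[OF herm assms(2)] by simp_all
qed

definition supported_on :: "'i set \<Rightarrow> 'i set \<Rightarrow> ('i \<Rightarrow> 'i \<Rightarrow> complex) \<Rightarrow> bool" where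
  "supported_on I J A \<longleftrightarrow> (\<forall>i\<in>I. \<forall>j\<in>I. i \<notin> J \<or> j \<notin> J \<longrightarrow> A i j = 0)"

lemma psd_supported_on_diag_zero:
  assumes "finite I" "a \<in> I" "psd I A" "Re (A a a) = 0" "supported_on I (insert a F) A"
  shows "supported_on I F A"
proof -
  have row: "A a j = 0" and col: "A j a = 0" if "j \<in> I" for j
    using psd_diag_zero_row_zero[OF assms(1,2) that assms(3,4)] assms(2,3) that
    unfolding psd_iff_quad_form hermitian_def by (metis complex_cnj_zero)+
  then show ?thesis using assms(5) unfolding supported_on_def by (metis insert_iff)
qed

lemma supported_on_sym_eliminate:
  assumes "a \<in> I" "A a a \<noteq> 0" "supported_on I (insert a F) A"
  shows "supported_on I F (sym_eliminate a A)"
  unfolding supported_on_def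
proof (intro ballI impI)
  fix i j assume ij: "i \<in> I" "j \<in> I" "i \<notin> F \<or> j \<notin> F"
  show "sym_eliminate a A i j = 0"
  proof (cases "i = a \<or> j = a")
    case True
    then show ?thesis using sym_eliminate_pivot[of A a] assms(2) by blast
  next
    case False
    then have "A i j = 0" "A i a = 0 \<or> A a j = 0"
      using assms(1,3) ij unfolding supported_on_def by auto
    then show ?thesis by (auto simp: sym_eliminate_def)
  qed
qed

lemma psd_rank_one_decomp_supported_on:
  assumes "finite J" "J \<subseteq> I" "finite I" "psd I A" "supported_on I J A"
  shows "\<exists>vs. rank_one_decomp I A vs"
  using assms(1,2,4,5)
proof (induction J arbitrary: A rule: finite_induct)
  case empty
  then show ?case by (auto simp: rank_one_decomp_def supported_on_def intro!: exI[of _ "[]"])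
next
  case (insert a F A)
  have a: "a \<in> I" and psd: "psd I A" using insert.prems by auto
  consider "Re (A a a) = 0" | "Re (A a a) > 0" using psd_diag_nonneg[OF assms(3) a psd] by linarith
  then show ?case
  proof cases
    case 1
    then show ?thesis
      using insert.IH insert.prems psd_supported_on_diag_zero[OF assms(3) a psd] by blast
  next
    case 2
    define r where "r = Re (A a a)"
    have herm: "hermitian I A" using psd unfolding psd_iff_quad_form by blast
    then have Aaa: "A a a = of_real r" using hermitian_diag_real[OF _ a] unfolding r_def by blast
    then have "A a a \<noteq> 0" using 2 unfolding r_def by auto
    obtain vs where vs: "rank_one_decomp I (sym_eliminate a A) vs"
      using insert.IH insert.prems psd_sym_eliminate[OF assms(3) a psd 2]
        supported_on_sym_eliminate[of a I A, OF a \<open>A a a \<noteq> 0\<close>] by blast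
    \<comment> \<open>the rank-one term removed by eliminating row and column a\<close>
    define v where "v i = A i a / of_real (sqrt r)" for i
    have "A i j = v i * cnj (v j) + sym_eliminate a A i j" if "i \<in> I" "j \<in> I" for i j
    proof -
      have "A a j = cnj (A j a)" using herm a that unfolding hermitian_def by blast
      moreover have "of_real (sqrt r) * of_real (sqrt r) = (of_real r :: complex)"
        using 2 unfolding r_def by (simp flip: of_real_mult)
      ultimately show ?thesis unfolding v_def sym_eliminate_def Aaa by simp
    qed
    then have "rank_one_decomp I A (v # vs)"
      using vs unfolding rank_one_decomp_def by simp
    then show ?thesis by blast
  qed
qed

lemma psd_rank_one_decomp: "finite I \<Longrightarrow> psd I A \<Longrightarrow> \<exists>vs. rank_one_decomp I A vs"
  using psd_rank_one_decomp_supported_on[of I I] by (simp add: supported_on_def)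

section \<open>Positive definiteness and traces\<close>

definition spans :: "'i set \<Rightarrow> ('i \<Rightarrow> complex) list \<Rightarrow> bool" where
  "spans I vs \<longleftrightarrow> (\<forall>x\<in>vecs I. (\<forall>v\<in>set vs. cinner I v x = 0) \<longrightarrow> x = (\<lambda>_. 0))"

definition trace_mult :: "'i set \<Rightarrow> ('i \<Rightarrow> 'i \<Rightarrow> complex) \<Rightarrow> ('i \<Rightarrow> 'i \<Rightarrow> complex) \<Rightarrow> complex" where
  "trace_mult I A B = (\<Sum>b\<in>I. \<Sum>a\<in>I. A b a * B a b)"

lemma sum_sum_list_swap: "(\<Sum>i\<in>I. \<Sum>v\<leftarrow>vs. f i v) = (\<Sum>v\<leftarrow>vs. \<Sum>i\<in>I. f i v)"
  by (induction vs) (simp_all add: sum.distrib)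

lemma quad_form_rank_one_decomp:
  assumes "rank_one_decomp I M us"
  shows "quad_form I M x = of_real (\<Sum>u\<leftarrow>us. (cmod (cinner I u x))\<^sup>2)"
proof -
  have "quad_form I M x = (\<Sum>i\<in>I. \<Sum>j\<in>I. \<Sum>u\<leftarrow>us. (cnj (x i) * u i) * (cnj (u j) * x j))"
    unfolding quad_form_def
  proof (intro sum.cong refl)
    fix i j assume "i \<in> I" "j \<in> I"
    then have "M i j = (\<Sum>u\<leftarrow>us. u i * cnj (u j))" using assms unfolding rank_one_decomp_def by blast
    then show "cnj (x i) * M i j * x j = (\<Sum>u\<leftarrow>us. (cnj (x i) * u i) * (cnj (u j) * x j))"
      by (simp only: sum_list_const_mult[symmetric] sum_list_mult_const[symmetric]) (simp add: ac_simps)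
  qed
  also have "\<dots> = (\<Sum>u\<leftarrow>us. cnj (cinner I u x) * cinner I u x)"
    unfolding sum_sum_list_swap cinner_def by (simp add: cnj_sum sum_product ac_simps)
  also have "\<dots> = of_real (\<Sum>u\<leftarrow>us. (cmod (cinner I u x))\<^sup>2)"
    unfolding cnj_mult_self sum_list_of_real[symmetric] by (simp add: o_def)
  finally show ?thesis .
qed

lemma cnj_sum_list: "cnj (\<Sum>v\<leftarrow>vs. f v) = (\<Sum>v\<leftarrow>vs. cnj (f v))"
  by (induction vs) simp_all

lemma rank_one_decomp_hermitian: "rank_one_decomp I M us \<Longrightarrow> hermitian I M"
  unfolding rank_one_decomp_def hermitian_def by (simp add: cnj_sum_list mult.commute)

lemma pos_def_iff_spans:
  assumes decomp: "rank_one_decomp I M us"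
  shows "pos_def I M \<longleftrightarrow> spans I us"
proof -
  have form: "Re (quad_form I M x) = (\<Sum>u\<leftarrow>us. (cmod (cinner I u x))\<^sup>2)"
    "Im (quad_form I M x) = 0" for x
    unfolding quad_form_rank_one_decomp[OF decomp] by simp_all
  have nonneg: "Re (quad_form I M x) \<ge> 0" for x
    unfolding form by (rule sum_list_nonneg) auto
  have zero_iff: "Re (quad_form I M x) = 0 \<longleftrightarrow> (\<forall>u\<in>set us. cinner I u x = 0)" for x
    unfolding form by (subst sum_list_nonneg_eq_0_iff) auto
  have "psd I M"
    unfolding psd_iff_quad_form using rank_one_decomp_hermitian[OF decomp] form nonneg by blast
  then show ?thesis
    unfolding pos_def_def spans_def cinner_opapply_eq_quad_form
    using nonneg zero_iff by (metis order_less_le)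
qed

lemma trace_mult_rank_one_decomp:
  assumes "rank_one_decomp I B vs"
  shows "trace_mult I A B = (\<Sum>v\<leftarrow>vs. quad_form I A v)"
proof -
  have "trace_mult I A B = (\<Sum>b\<in>I. \<Sum>a\<in>I. \<Sum>v\<leftarrow>vs. cnj (v b) * A b a * v a)"
    unfolding trace_mult_def
  proof (intro sum.cong refl)
    fix a b assume "a \<in> I" "b \<in> I"
    then have "B a b = (\<Sum>v\<leftarrow>vs. v a * cnj (v b))" using assms unfolding rank_one_decomp_def by blast
    then show "A b a * B a b = (\<Sum>v\<leftarrow>vs. cnj (v b) * A b a * v a)"
      by (simp only: sum_list_const_mult[symmetric]) (simp add: ac_simps)
  qed
  then show ?thesis unfolding quad_form_def sum_sum_list_swap .
qed

lemma trace_mult_pos_def_psd: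
  assumes "finite I" "pos_def I P" "psd I F" "op_nonzero I F"
  shows "Re (trace_mult I P F) > 0"
proof -
  obtain vs where decomp: "rank_one_decomp I F vs" using psd_rank_one_decomp[OF assms(1,3)] by blast
  let ?restr = "\<lambda>v i. if i \<in> I then v i else 0"
  have restr_vecs: "?restr v \<in> vecs I" for v by (simp add: vecs_def)
  have psd: "psd I P" using assms(2) unfolding pos_def_def by blast
  have form: "Im (quad_form I P v) = 0 \<and> Re (quad_form I P v) \<ge> 0" for v
    using psd restr_vecs[of v] quad_form_restrict[of I P v] unfolding psd_iff_quad_form by metis
  then have real: "quad_form I P v = of_real (Re (quad_form I P v))" for v
    by (simp add: complex_eq_iff)
  obtain a b where ab: "a \<in> I" "b \<in> I" "F a b \<noteq> 0" using assms(4) unfolding op_nonzero_def by blast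
  have "\<exists>v\<in>set vs. v a \<noteq> 0"
  proof (rule ccontr)
    assume "\<not> ?thesis"
    then have "(\<Sum>v\<leftarrow>vs. v a * cnj (v b)) = (\<Sum>v\<leftarrow>vs. 0)" by (intro arg_cong[where f=sum_list] map_cong) auto
    then show False using ab decomp unfolding rank_one_decomp_def by simp
  qed
  then obtain v where v: "v \<in> set vs" "v a \<noteq> 0" by blast
  then have "?restr v \<noteq> (\<lambda>_. 0)" using ab(1) by (auto dest: fun_cong[where x=a])
  have "Re (quad_form I P v) > 0"
    using assms(2) restr_vecs[of v] \<open>?restr v \<noteq> (\<lambda>_. 0)\<close> quad_form_restrict[of I P v]
    unfolding pos_def_def cinner_opapply_eq_quad_form by metis
  also have "Re (quad_form I P v) \<le> (\<Sum>v\<leftarrow>vs. Re (quad_form I P v))"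
    using v(1) form by (intro member_le_sum_list) auto
  also have "\<dots> = Re (trace_mult I P F)"
  proof -
    have "trace_mult I P F = (\<Sum>v\<leftarrow>vs. of_real (Re (quad_form I P v)))"
      unfolding trace_mult_rank_one_decomp[OF decomp] by (intro arg_cong[where f=sum_list] map_cong refl real)
    then show ?thesis
      by (simp only: sum_list_of_real[of "map _ vs", unfolded map_map o_def] Re_complex_of_real)
  qed
  finally show ?thesis .
qed

section \<open>Tensor powers\<close>

definition tensor_power_op ::
  "nat \<Rightarrow> (('a \<times> 'b) \<Rightarrow> ('a \<times> 'b) \<Rightarrow> complex) \<Rightarrow> ('a list \<times> 'b list) \<Rightarrow> ('a list \<times> 'b list) \<Rightarrow> complex" where
  "tensor_power_op k M = (\<lambda>(xs, ys) (xs', ys'). \<Prod>l<k. M (xs ! l, ys ! l) (xs' ! l, ys' ! l))"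

definition tensor_vec :: "('a \<times> 'b \<Rightarrow> complex) \<Rightarrow> ('a list \<times> 'b list \<Rightarrow> complex) \<Rightarrow> ('a list \<times> 'b list \<Rightarrow> complex)" where
  "tensor_vec w u = (\<lambda>(xs, ys). if xs \<noteq> [] \<and> ys \<noteq> [] then w (hd xs, hd ys) * u (tl xs, tl ys) else 0)"

fun tensor_power_family :: "nat \<Rightarrow> ('a \<times> 'b \<Rightarrow> complex) list \<Rightarrow> ('a list \<times> 'b list \<Rightarrow> complex) list" where
  "tensor_power_family 0 ws = [\<lambda>_. 1]"
| "tensor_power_family (Suc k) ws = [tensor_vec w u. w \<leftarrow> ws, u \<leftarrow> tensor_power_family k ws]"

lemma lists_k_0: "lists_k 0 X = {[]}"
  by (auto simp: lists_k_def)

lemma Cons_in_lists_k_Suc: "x # xs \<in> lists_k (Suc k) X \<longleftrightarrow> x \<in> X \<and> xs \<in> lists_k k X"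
  by (auto simp: lists_k_def)

lemma lists_k_Suc_cases:
  assumes "a \<in> lists_k (Suc k) X \<times> lists_k (Suc k) Y"
  obtains x y xs ys where "a = (x # xs, y # ys)" "(x, y) \<in> X \<times> Y" "(xs, ys) \<in> lists_k k X \<times> lists_k k Y"
  using assms by (cases a; cases "fst a"; cases "snd a") (auto simp: lists_k_def)

lemma finite_lists_k: "finite X \<Longrightarrow> finite (lists_k k X)"
  unfolding lists_k_def using finite_lists_length_eq[of X k] by (simp add: conj_commute)

lemma nth_in_lists_k: "xs \<in> lists_k k X \<Longrightarrow> l < k \<Longrightarrow> xs ! l \<in> X"
  by (auto simp: lists_k_def)

lemma sum_lists_k_Suc:
  "(\<Sum>a\<in>lists_k (Suc k) X \<times> lists_k (Suc k) Y. f a) =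
   (\<Sum>c\<in>X \<times> Y. \<Sum>d\<in>lists_k k X \<times> lists_k k Y. f (fst c # fst d, snd c # snd d))"
proof -
  have "(\<Sum>a\<in>lists_k (Suc k) X \<times> lists_k (Suc k) Y. f a) =
     (\<Sum>(c, d)\<in>(X \<times> Y) \<times> (lists_k k X \<times> lists_k k Y). f (fst c # fst d, snd c # snd d))"
    by (rule sum.reindex_bij_witness[of _ "\<lambda>(c, d). (fst c # fst d, snd c # snd d)"
          "\<lambda>a. ((hd (fst a), hd (snd a)), (tl (fst a), tl (snd a)))"])
       (auto elim!: lists_k_Suc_cases simp: Cons_in_lists_k_Suc)
  then show ?thesis by (simp add: sum.cartesian_product)
qed

lemma tensor_power_op_Suc:
  "tensor_power_op (Suc k) M (x # xs, y # ys) (x' # xs', y' # ys') =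
     M (x, y) (x', y') * tensor_power_op k M (xs, ys) (xs', ys')"
  unfolding tensor_power_op_def prod.lessThan_Suc_shift by simp

lemma tensor_vec_Cons: "tensor_vec w u (x # xs, y # ys) = w (x, y) * u (xs, ys)"
  by (simp add: tensor_vec_def)

lemma sum_list_tensor_family:
  "(\<Sum>v\<leftarrow>[g w u. w \<leftarrow> ws, u \<leftarrow> us]. f v) = (\<Sum>w\<leftarrow>ws. \<Sum>u\<leftarrow>us. f (g w u))"
  by (induction ws) (simp_all add: o_def)

lemma rank_one_decomp_tensor_power:
  assumes "rank_one_decomp (X \<times> Y) P ws"
  shows "rank_one_decomp (lists_k k X \<times> lists_k k Y) (tensor_power_op k P) (tensor_power_family k ws)"
proof (induction k)
  case 0
  then show ?case by (simp add: rank_one_decomp_def tensor_power_op_def lists_k_0)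
next
  case (Suc k)
  show ?case
    unfolding rank_one_decomp_def
  proof (intro ballI)
    fix a b assume a: "a \<in> lists_k (Suc k) X \<times> lists_k (Suc k) Y" and b: "b \<in> lists_k (Suc k) X \<times> lists_k (Suc k) Y"
    obtain x y xs ys where a': "a = (x # xs, y # ys)" "(x, y) \<in> X \<times> Y" "(xs, ys) \<in> lists_k k X \<times> lists_k k Y"
      using a by (rule lists_k_Suc_cases)
    obtain x' y' xs' ys' where b': "b = (x' # xs', y' # ys')" "(x', y') \<in> X \<times> Y"
      "(xs', ys') \<in> lists_k k X \<times> lists_k k Y"
      using b by (rule lists_k_Suc_cases)
    have "tensor_power_op (Suc k) P a b = P (x, y) (x', y') * tensor_power_op k P (xs, ys) (xs', ys')"
      unfolding a' b' tensor_power_op_Suc ..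
    also have "\<dots> = (\<Sum>w\<leftarrow>ws. w (x, y) * cnj (w (x', y'))) *
        (\<Sum>u\<leftarrow>tensor_power_family k ws. u (xs, ys) * cnj (u (xs', ys')))"
      using assms Suc a' b' unfolding rank_one_decomp_def by simp
    also have "\<dots> = (\<Sum>w\<leftarrow>ws. \<Sum>u\<leftarrow>tensor_power_family k ws.
        (w (x, y) * u (xs, ys)) * cnj (w (x', y') * u (xs', ys')))"
      by (subst sum_list_mult_const[symmetric], simp only: sum_list_const_mult[symmetric]) (simp add: ac_simps)
    also have "\<dots> = (\<Sum>v\<leftarrow>tensor_power_family (Suc k) ws. v a * cnj (v b))"
      unfolding tensor_power_family.simps sum_list_tensor_family a' b' tensor_vec_Cons ..
    finally show "tensor_power_op (Suc k) P a b = (\<Sum>v\<leftarrow>tensor_power_family (Suc k) ws. v a * cnj (v b))" .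
  qed
qed

lemma cinner_tensor_vec:
  "cinner (lists_k (Suc k) X \<times> lists_k (Suc k) Y) (tensor_vec w u) x =
   (\<Sum>c\<in>X \<times> Y. cnj (w c) * (\<Sum>d\<in>lists_k k X \<times> lists_k k Y. cnj (u d) * x (fst c # fst d, snd c # snd d)))"
  unfolding cinner_def sum_lists_k_Suc by (simp add: tensor_vec_def sum_distrib_left ac_simps)

lemma spans_tensor:
  assumes "spans (X \<times> Y) ws" "spans (lists_k k X \<times> lists_k k Y) us"
  shows "spans (lists_k (Suc k) X \<times> lists_k (Suc k) Y) [tensor_vec w u. w \<leftarrow> ws, u \<leftarrow> us]"
  unfolding spans_def
proof (intro ballI impI)
  let ?I = "lists_k k X \<times> lists_k k Y" and ?J = "lists_k (Suc k) X \<times> lists_k (Suc k) Y"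
  fix x assume x: "x \<in> vecs ?J" and orth: "\<forall>v\<in>set [tensor_vec w u. w \<leftarrow> ws, u \<leftarrow> us]. cinner ?J v x = 0"
  define slice where "slice c d = (if d \<in> ?I then x (fst c # fst d, snd c # snd d) else 0)" for c d
  have "cinner ?I u (slice c) = 0" if u: "u \<in> set us" and c: "c \<in> X \<times> Y" for u c
  proof -
    define z where "z c = (if c \<in> X \<times> Y then cinner ?I u (slice c) else 0)" for c
    have "cinner (X \<times> Y) w z = 0" if "w \<in> set ws" for w
    proof -
      have "cinner (X \<times> Y) w z = cinner ?J (tensor_vec w u) x"
        unfolding cinner_tensor_vec by (simp add: cinner_def z_def slice_def)
      then show ?thesis using orth that u by auto
    qed
    then have "z = (\<lambda>_. 0)" using assms(1) unfolding spans_def by (simp add: vecs_def z_def)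
    then show ?thesis using c by (metis z_def)
  qed
  then have slice_zero: "slice c = (\<lambda>_. 0)" if "c \<in> X \<times> Y" for c
    using assms(2) that unfolding spans_def by (simp add: vecs_def slice_def)
  show "x = (\<lambda>_. 0)"
  proof
    fix a show "x a = 0"
    proof (cases "a \<in> ?J")
      case True
      then obtain p q ps qs where a: "a = (p # ps, q # qs)" "(p, q) \<in> X \<times> Y" "(ps, qs) \<in> ?I"
        by (rule lists_k_Suc_cases)
      then have "slice (p, q) (ps, qs) = 0" using slice_zero by simp
      then show ?thesis using a by (simp add: slice_def)
    next
      case False
      then show ?thesis using x unfolding vecs_def by blast
    qed
  qed
qed

lemma spans_tensor_power:
  assumes "spans (X \<times> Y) ws"
  shows "spans (lists_k k X \<times> lists_k k Y) (tensor_power_family k ws)"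
proof (induction k)
  case 0
  show ?case
    unfolding spans_def
  proof (intro ballI impI)
    fix x assume x: "x \<in> vecs (lists_k 0 X \<times> lists_k 0 Y)"
      and "\<forall>v\<in>set (tensor_power_family 0 ws). cinner (lists_k 0 X \<times> lists_k 0 Y) v x = 0"
    then have "x ([], []) = 0" by (simp add: cinner_def lists_k_0)
    show "x = (\<lambda>_. 0)"
    proof
      fix p show "x p = 0"
      proof (cases "p = ([], [])")
        case True
        then show ?thesis using \<open>x ([], []) = 0\<close> by simp
      next
        case False
        then have "p \<notin> lists_k 0 X \<times> lists_k 0 Y" by (simp add: lists_k_0)
        then show ?thesis using x unfolding vecs_def by blast
      qed
    qed
  qed
next
  case (Suc k)
  then show ?case using spans_tensor[OF assms] by simp
qed

lemma pos_def_tensor_power: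
  assumes "finite X" "finite Y" "pos_def (X \<times> Y) P"
  shows "pos_def (lists_k k X \<times> lists_k k Y) (tensor_power_op k P)"
proof -
  have "psd (X \<times> Y) P" using assms(3) unfolding pos_def_def by blast
  moreover have "finite (X \<times> Y)" using assms(1,2) by simp
  ultimately obtain ws where decomp: "rank_one_decomp (X \<times> Y) P ws"
    using psd_rank_one_decomp by blast
  then have "spans (X \<times> Y) ws" using assms(3) pos_def_iff_spans by blast
  then show ?thesis
    using pos_def_iff_spans[OF rank_one_decomp_tensor_power[OF decomp]] spans_tensor_power by blast
qed

lemma hermitian_tensor_power:
  assumes "hermitian (X \<times> Y) M"
  shows "hermitian (lists_k k X \<times> lists_k k Y) (tensor_power_op k M)"
  unfolding hermitian_def
proof (clarify)
  fix xs ys xs' ys'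
  assume "xs \<in> lists_k k X" "ys \<in> lists_k k Y" "xs' \<in> lists_k k X" "ys' \<in> lists_k k Y"
  then have "(xs ! l, ys ! l) \<in> X \<times> Y" "(xs' ! l, ys' ! l) \<in> X \<times> Y" if "l < k" for l
    using that by (simp_all add: nth_in_lists_k)
  then have "M (xs ! l, ys ! l) (xs' ! l, ys' ! l) = cnj (M (xs' ! l, ys' ! l) (xs ! l, ys ! l))"
    if "l < k" for l
    using assms that unfolding hermitian_def by blast
  then show "tensor_power_op k M (xs, ys) (xs', ys') = cnj (tensor_power_op k M (xs', ys') (xs, ys))"
    unfolding tensor_power_op_def by (simp add: cnj_prod)
qed

lemma tensor_power_op_partial_transpose:
  "tensor_power_op k (partial_transpose M) = partial_transpose (tensor_power_op k M)"
  by (simp add: fun_eq_iff tensor_power_op_def partial_transpose_def)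

lemma trace_mult_partial_transpose:
  "trace_mult (I \<times> J) (partial_transpose A) (partial_transpose B) = trace_mult (I \<times> J) A B"
proof -
  have "trace_mult (I \<times> J) (partial_transpose A) (partial_transpose B) =
      (\<Sum>(b, a)\<in>(I \<times> J) \<times> (I \<times> J). partial_transpose A b a * partial_transpose B a b)"
    unfolding trace_mult_def sum.cartesian_product ..
  also have "\<dots> = (\<Sum>(b, a)\<in>(I \<times> J) \<times> (I \<times> J). A b a * B a b)"
    by (rule sum.reindex_bij_witness[of _ "\<lambda>((x, y), (x', y')). ((x, y'), (x', y))"
          "\<lambda>((x, y), (x', y')). ((x, y'), (x', y))"])
       (auto simp: partial_transpose_def)
  also have "\<dots> = trace_mult (I \<times> J) A B"
    unfolding trace_mult_def sum.cartesian_product ..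
  finally show ?thesis .
qed

lemma op_nonzero_partial_transpose:
  assumes "op_nonzero (I \<times> J) E"
  shows "op_nonzero (I \<times> J) (partial_transpose E)"
proof -
  obtain x y x' y' where "(x, y) \<in> I \<times> J" "(x', y') \<in> I \<times> J" "E (x, y) (x', y') \<noteq> 0"
    using assms unfolding op_nonzero_def by auto
  then have "(x, y') \<in> I \<times> J" "(x', y) \<in> I \<times> J" "partial_transpose E (x, y') (x', y) \<noteq> 0"
    by (auto simp: partial_transpose_def)
  then show ?thesis unfolding op_nonzero_def by blast
qed

section \<open>Operators orthogonal to tensor powers of S\<close>

lemma tensor_power_column_in_tensor_power_space:
  assumes "finite X" "finite Y" "support (X \<times> Y) \<sigma> \<subseteq> S" "b \<in> lists_k k X \<times> lists_k k Y"
  shows "\<exists>v\<in>tensor_power_space k S. \<forall>a\<in>lists_k k X \<times> lists_k k Y. v a = tensor_power_op k \<sigma> a b"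
proof -
  obtain xs' ys' where b: "b = (xs', ys')" "xs' \<in> lists_k k X" "ys' \<in> lists_k k Y"
    using assms(4) by auto
  have fin: "finite (X \<times> Y)" using assms(1,2) by simp
  define column where "column c = opapply (X \<times> Y) \<sigma> (unit_vec c)" for c
  define factors where "factors l = column (xs' ! l, ys' ! l)" for l
  have "column c \<in> S" if "c \<in> X \<times> Y" for c
    using assms(3) unit_vec_in_vecs[OF that] unfolding support_def column_def by blast
  then have "factors l \<in> S" if "l < k" for l
    using b that unfolding factors_def by (simp add: nth_in_lists_k)
  then have "prod_vec k factors \<in> tensor_power_space k S"
    unfolding tensor_power_space_def
    by (intro CollectI exI[of _ 1] exI[of _ "\<lambda>_. 1"] exI[of _ "\<lambda>_. factors"]) simp
  moreover have "prod_vec k factors a = tensor_power_op k \<sigma> a b"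
    if a_in: "a \<in> lists_k k X \<times> lists_k k Y" for a
  proof -
    obtain xs ys where a: "a = (xs, ys)" "xs \<in> lists_k k X" "ys \<in> lists_k k Y" using a_in by auto
    have "factors l (xs ! l, ys ! l) = \<sigma> (xs ! l, ys ! l) (xs' ! l, ys' ! l)" if "l < k" for l
      unfolding factors_def column_def using a b that by (simp add: opapply_unit_vec[OF fin] nth_in_lists_k)
    moreover have "length xs = k" "length ys = k" using a by (simp_all add: lists_k_def)
    ultimately show ?thesis unfolding a b prod_vec_def tensor_power_op_def by simp
  qed
  ultimately show ?thesis by blast
qed

lemma trace_mult_tensor_power_orth:
  assumes "finite X" "finite Y" "hermitian (X \<times> Y) \<sigma>" "support (X \<times> Y) \<sigma> \<subseteq> S"
    and "support (lists_k k X \<times> lists_k k Y) E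
      \<subseteq> orth_compl (lists_k k X \<times> lists_k k Y) (tensor_power_space k S)"
  shows "trace_mult (lists_k k X \<times> lists_k k Y) (tensor_power_op k \<sigma>) E = 0"
proof -
  let ?I = "lists_k k X \<times> lists_k k Y"
  have fin: "finite ?I" using assms(1,2) by (simp add: finite_lists_k)
  have herm: "hermitian ?I (tensor_power_op k \<sigma>)" using hermitian_tensor_power[OF assms(3)] .
  have "(\<Sum>a\<in>?I. tensor_power_op k \<sigma> b a * E a b) = 0" if b: "b \<in> ?I" for b
  proof -
    obtain v where v: "v \<in> tensor_power_space k S" and col: "\<forall>a\<in>?I. v a = tensor_power_op k \<sigma> a b"
      using tensor_power_column_in_tensor_power_space[OF assms(1,2,4) b] by blast
    have "opapply ?I E (unit_vec b) \<in> orth_compl ?I (tensor_power_space k S)"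
      using assms(5) unit_vec_in_vecs[OF b] unfolding support_def by blast
    then have "0 = cinner ?I v (opapply ?I E (unit_vec b))"
      using v unfolding orth_compl_def by simp
    also have "\<dots> = (\<Sum>a\<in>?I. tensor_power_op k \<sigma> b a * E a b)"
      unfolding cinner_def
    proof (intro sum.cong refl)
      fix a assume a: "a \<in> ?I"
      then have "cnj (v a) = tensor_power_op k \<sigma> b a"
        using col herm b unfolding hermitian_def by (metis complex_cnj_cnj)
      then show "cnj (v a) * opapply ?I E (unit_vec b) a = tensor_power_op k \<sigma> b a * E a b"
        using a b by (simp add: opapply_unit_vec[OF fin])
    qed
    finally show ?thesis by simp
  qed
  then show ?thesis unfolding trace_mult_def by simp
qed

theorem lemma2:
  fixes X :: "'a set" and Y :: "'b set"
    and S :: "('a \<times> 'b \<Rightarrow> complex) set"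
    and \<sigma> :: "('a \<times> 'b) \<Rightarrow> ('a \<times> 'b) \<Rightarrow> complex"
  assumes "finite X" and "finite Y"
    and "is_subspace (X \<times> Y) S"
    and "ppt_definite (X \<times> Y) \<sigma>"
    and "support (X \<times> Y) \<sigma> \<subseteq> S"
  shows "strongly_ppt_unextendible X Y S"
  unfolding strongly_ppt_unextendible_def
proof (intro allI impI notI)
  fix k :: nat
  let ?I = "lists_k k X \<times> lists_k k Y"
  assume "k > 0" and "ppt_extendible ?I (tensor_power_space k S)"
  then obtain E where nonzero: "op_nonzero ?I E" and ppt: "ppt ?I E"
    and orth: "support ?I E \<subseteq> orth_compl ?I (tensor_power_space k S)"
    unfolding ppt_extendible_def by blast
  have herm: "hermitian (X \<times> Y) \<sigma>" and pos: "pos_def (X \<times> Y) (partial_transpose \<sigma>)"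
    using assms(4) unfolding ppt_definite_def psd_iff_quad_form by blast+
  have "trace_mult ?I (tensor_power_op k \<sigma>) E = 0"
    by (rule trace_mult_tensor_power_orth[OF assms(1,2) herm assms(5) orth])
  then have "trace_mult ?I (tensor_power_op k (partial_transpose \<sigma>)) (partial_transpose E) = 0"
    by (simp add: tensor_power_op_partial_transpose trace_mult_partial_transpose)
  moreover have "Re (trace_mult ?I (tensor_power_op k (partial_transpose \<sigma>)) (partial_transpose E)) > 0"
    using assms(1,2) ppt unfolding ppt_def
    by (intro trace_mult_pos_def_psd pos_def_tensor_power[OF assms(1,2) pos]
        op_nonzero_partial_transpose[OF nonzero]) (simp_all add: finite_lists_k)
  ultimately show False by simp
qed

end
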